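(* Let $A$, $B$, $Y$ be sets and let $g:A\to Y$ and $h:B\to Y$ be injective relations. Let $P$ be the set of all paths (minimal non-empty synchronisations) of $(g,h)$, each path being regarded as a pair $\langle\alpha,\beta\rangle$ with $\alpha\subseteq A$, $\beta\subseteq B$. Define relations $p:P\to A$ and $q:P\to B$ by: $\langle\alpha,\beta\rangle\,p\,a$ iff $a\in\alpha$, and $\langle\alpha,\beta\rangle\,q\,b$ iff $b\in\beta$ (so $p(\langle\alpha,\beta\rangle)=\alpha$ and $q(\langle\alpha,\beta\rangle)=\beta$). Then $p$ and $q$ are injective relations, and the square $gp=hq$ is a pullback of $g$ and $h$ in the category $\mathbf{iRel}$.
   Context: A binary relation $R:A\to Z$ (i.e. $R\subseteq A\times Z$; write $aRz$ for $\langle a,z\rangle\in R$) is injective if $aRz$ and $a'Rz$ imply $a=a'$. $\mathbf{iRel}$ is the category of sets and injective relations, with composition of relations ($R$ then $S$ written $SR$). For a relation $R:A\to Z$ and $\alpha\subseteq A$, $R(\alpha)=\{z\in Z: aRz\text{ for some }a\in\alpha\}$, and $R(a)=R(\{a\})$. Given injective relations $g:A\to Y$ and $h:B\to Y$, a synchronisation is a pair $\langle\alpha,\beta\rangle$ with $\alpha\subseteq A$, $\beta\subseteq B$ and $g(\alpha)=h(\beta)$; such pairs are identified with subsets $\alpha+\beta$ of the disjoint union $A+B$, and inclusion, intersection, union and emptiness of pairs are taken via this identification. A path is a non-empty synchronisation that is minimal with respect to inclusion among non-empty synchronisations. *)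

theory Defs
  imports Main
begin

text \<open>A relation R : A -> Z is a set of pairs R \<subseteq> A \<times> Z. Composition "S after R"
  (written SR in the paper) is the relational composition R O S.\<close>

definition irel :: "('a \<times> 'z) set \<Rightarrow> 'a set \<Rightarrow> 'z set \<Rightarrow> bool" where
  "irel R A Z \<longleftrightarrow> R \<subseteq> A \<times> Z \<and>
     (\<forall>a a' z. (a, z) \<in> R \<longrightarrow> (a', z) \<in> R \<longrightarrow> a = a')"

definition synchronisation ::
  "'a set \<Rightarrow> 'b set \<Rightarrow> ('a \<times> 'y) set \<Rightarrow> ('b \<times> 'y) set \<Rightarrow> 'a set \<Rightarrow> 'b set \<Rightarrow> bool" where
  "synchronisation A B g h \<alpha> \<beta> \<longleftrightarrow> \<alpha> \<subseteq> A \<and> \<beta> \<subseteq> B \<and> g `` \<alpha> = h `` \<beta>"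

definition is_path ::
  "'a set \<Rightarrow> 'b set \<Rightarrow> ('a \<times> 'y) set \<Rightarrow> ('b \<times> 'y) set \<Rightarrow> 'a set \<Rightarrow> 'b set \<Rightarrow> bool" where
  "is_path A B g h \<alpha> \<beta> \<longleftrightarrow>
     synchronisation A B g h \<alpha> \<beta> \<and> (\<alpha> \<noteq> {} \<or> \<beta> \<noteq> {}) \<and>
     (\<forall>\<alpha>' \<beta>'. synchronisation A B g h \<alpha>' \<beta>' \<and> (\<alpha>' \<noteq> {} \<or> \<beta>' \<noteq> {}) \<and>
        \<alpha>' \<subseteq> \<alpha> \<and> \<beta>' \<subseteq> \<beta> \<longrightarrow> \<alpha>' = \<alpha> \<and> \<beta>' = \<beta>)"

definition paths ::
  "'a set \<Rightarrow> 'b set \<Rightarrow> ('a \<times> 'y) set \<Rightarrow> ('b \<times> 'y) set \<Rightarrow> ('a set \<times> 'b set) set" where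
  "paths A B g h = {(\<alpha>, \<beta>). is_path A B g h \<alpha> \<beta>}"

definition path_proj1 :: "('a set \<times> 'b set) set \<Rightarrow> (('a set \<times> 'b set) \<times> 'a) set" where
  "path_proj1 P = {((\<alpha>, \<beta>), a). (\<alpha>, \<beta>) \<in> P \<and> a \<in> \<alpha>}"

definition path_proj2 :: "('a set \<times> 'b set) set \<Rightarrow> (('a set \<times> 'b set) \<times> 'b) set" where
  "path_proj2 P = {((\<alpha>, \<beta>), b). (\<alpha>, \<beta>) \<in> P \<and> b \<in> \<beta>}"

end

theory Submission
  imports Defs
begin

(* Since g and h are injective, direct images under them commute with intersections
   (also of non-empty families) and differences.  Hence synchronisations are closed under
   these operations, which yields the two structural facts about paths:
   (1) two paths that share an element coincide (their intersection is a non-empty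
       sub-synchronisation of both), and
   (2) every element of a synchronisation lies in a path contained in it (the
       intersection of all synchronisations containing that element is such a path).
   Fact (1) makes p and q injective, and g p = h q holds because every path is a
   synchronisation.  Given a cone x : X -> A, y : X -> B with g x = h y, the fibre
   (x(xi), y(xi)) of each xi is a synchronisation; the mediating relation relates xi to
   the paths contained in its fibre.  Fact (2) gives u p = x and u q = y, and fact (1)
   shows that any other mediating relation equals u. *)

lemma irel_inj: "irel R A Z \<Longrightarrow> (a, z) \<in> R \<Longrightarrow> (a', z) \<in> R \<Longrightarrow> a = a'"
  unfolding irel_def by blast

lemma irel_subset: "irel R A Z \<Longrightarrow> (a, z) \<in> R \<Longrightarrow> a \<in> A \<and> z \<in> Z"
  unfolding irel_def by blast

lemma irel_Image_Diff: "irel g A Y \<Longrightarrow> g `` (\<alpha> - \<alpha>') = g `` \<alpha> - g `` \<alpha>'"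
  unfolding irel_def by blast

lemma irel_Image_Int: "irel g A Y \<Longrightarrow> g `` (\<alpha> \<inter> \<alpha>') = g `` \<alpha> \<inter> g `` \<alpha>'"
  unfolding irel_def by blast

lemma irel_Image_INT:
  assumes g: "irel g A Y" and "I \<noteq> {}"
  shows "g `` (\<Inter>i\<in>I. \<alpha> i) = (\<Inter>i\<in>I. g `` \<alpha> i)"
proof
  show "(\<Inter>i\<in>I. g `` \<alpha> i) \<subseteq> g `` (\<Inter>i\<in>I. \<alpha> i)"
  proof
    fix z assume z: "z \<in> (\<Inter>i\<in>I. g `` \<alpha> i)"
    obtain i0 where "i0 \<in> I" using \<open>I \<noteq> {}\<close> by blast
    with z obtain a where a: "a \<in> \<alpha> i0" "(a, z) \<in> g" by blast
    text \<open>Every preimage of z equals a, so a lies in every member of the family.\<close>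
    have "a \<in> \<alpha> i" if "i \<in> I" for i
      using z that a irel_inj[OF g] by blast
    then show "z \<in> g `` (\<Inter>i\<in>I. \<alpha> i)" using a(2) by blast
  qed
qed blast

lemma synchronisation_swap:
  "synchronisation A B g h \<alpha> \<beta> \<longleftrightarrow> synchronisation B A h g \<beta> \<alpha>"
  unfolding synchronisation_def by blast

lemma synchronisation_Int:
  assumes "irel g A Y" "irel h B Y"
    and "synchronisation A B g h \<alpha> \<beta>" "synchronisation A B g h \<alpha>' \<beta>'"
  shows "synchronisation A B g h (\<alpha> \<inter> \<alpha>') (\<beta> \<inter> \<beta>')"
  using assms irel_Image_Int[OF assms(1)] irel_Image_Int[OF assms(2)]
  unfolding synchronisation_def by auto

lemma synchronisation_Diff:
  assumes "irel g A Y" "irel h B Y"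
    and "synchronisation A B g h \<alpha> \<beta>" "synchronisation A B g h \<alpha>' \<beta>'"
  shows "synchronisation A B g h (\<alpha> - \<alpha>') (\<beta> - \<beta>')"
  using assms irel_Image_Diff[OF assms(1)] irel_Image_Diff[OF assms(2)]
  unfolding synchronisation_def by auto

lemma synchronisation_INT:
  assumes g: "irel g A Y" and h: "irel h B Y" and "I \<noteq> {}"
    and sync: "\<And>i. i \<in> I \<Longrightarrow> synchronisation A B g h (\<alpha> i) (\<beta> i)"
  shows "synchronisation A B g h (\<Inter>i\<in>I. \<alpha> i) (\<Inter>i\<in>I. \<beta> i)"
proof -
  have "g `` (\<Inter>i\<in>I. \<alpha> i) = (\<Inter>i\<in>I. g `` \<alpha> i)"
    by (rule irel_Image_INT[OF g \<open>I \<noteq> {}\<close>])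
  also have "\<dots> = (\<Inter>i\<in>I. h `` \<beta> i)"
    using sync unfolding synchronisation_def by (intro INF_cong) auto
  also have "\<dots> = h `` (\<Inter>i\<in>I. \<beta> i)"
    by (rule irel_Image_INT[OF h \<open>I \<noteq> {}\<close>, symmetric])
  finally have "g `` (\<Inter>i\<in>I. \<alpha> i) = h `` (\<Inter>i\<in>I. \<beta> i)" .
  moreover obtain i0 where "i0 \<in> I" using \<open>I \<noteq> {}\<close> by blast
  then have "(\<Inter>i\<in>I. \<alpha> i) \<subseteq> A \<and> (\<Inter>i\<in>I. \<beta> i) \<subseteq> B"
    using sync[OF \<open>i0 \<in> I\<close>] unfolding synchronisation_def by blast
  ultimately show ?thesis unfolding synchronisation_def by simp
qed

lemma is_path_swap: "is_path A B g h \<alpha> \<beta> \<longleftrightarrow> is_path B A h g \<beta> \<alpha>"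
  unfolding is_path_def synchronisation_swap[of A B g h] by blast

lemma is_path_synchronisation: "is_path A B g h \<alpha> \<beta> \<Longrightarrow> synchronisation A B g h \<alpha> \<beta>"
  unfolding is_path_def by blast

lemma is_path_nonempty: "is_path A B g h \<alpha> \<beta> \<Longrightarrow> \<alpha> \<noteq> {} \<or> \<beta> \<noteq> {}"
  unfolding is_path_def by blast

lemma is_path_minimal:
  assumes "is_path A B g h \<alpha> \<beta>" "synchronisation A B g h \<alpha>' \<beta>'" "\<alpha>' \<noteq> {} \<or> \<beta>' \<noteq> {}"
    "\<alpha>' \<subseteq> \<alpha>" "\<beta>' \<subseteq> \<beta>"
  shows "\<alpha>' = \<alpha> \<and> \<beta>' = \<beta>"
  using assms unfolding is_path_def by blast

lemma paths_overlap_eq: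
  assumes g: "irel g A Y" and h: "irel h B Y"
    and p1: "is_path A B g h \<alpha> \<beta>" and p2: "is_path A B g h \<alpha>' \<beta>'"
    and overlap: "\<alpha> \<inter> \<alpha>' \<noteq> {} \<or> \<beta> \<inter> \<beta>' \<noteq> {}"
  shows "\<alpha> = \<alpha>' \<and> \<beta> = \<beta>'"
proof -
  have sync: "synchronisation A B g h (\<alpha> \<inter> \<alpha>') (\<beta> \<inter> \<beta>')"
    by (rule synchronisation_Int[OF g h p1[THEN is_path_synchronisation] p2[THEN is_path_synchronisation]])
  have "\<alpha> \<inter> \<alpha>' = \<alpha> \<and> \<beta> \<inter> \<beta>' = \<beta>"
    by (rule is_path_minimal[OF p1 sync overlap]) auto
  moreover have "\<alpha> \<inter> \<alpha>' = \<alpha>' \<and> \<beta> \<inter> \<beta>' = \<beta>'"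
    by (rule is_path_minimal[OF p2 sync overlap]) auto
  ultimately show ?thesis by blast
qed

text \<open>Fact (2): every element on the left of a synchronisation lies in a path contained in
  it, namely the least synchronisation containing that element.\<close>

lemma path_through_left:
  assumes g: "irel g A Y" and h: "irel h B Y"
    and sync0: "synchronisation A B g h \<alpha>0 \<beta>0" and "a \<in> \<alpha>0"
  shows "\<exists>\<alpha> \<beta>. is_path A B g h \<alpha> \<beta> \<and> a \<in> \<alpha> \<and> \<alpha> \<subseteq> \<alpha>0 \<and> \<beta> \<subseteq> \<beta>0"
proof -
  define S where "S = {(\<alpha>, \<beta>). synchronisation A B g h \<alpha> \<beta> \<and> a \<in> \<alpha>}"
  define \<gamma> where "\<gamma> = (\<Inter>s\<in>S. fst s)"
  define \<delta> where "\<delta> = (\<Inter>s\<in>S. snd s)"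
  have "(\<alpha>0, \<beta>0) \<in> S" using sync0 \<open>a \<in> \<alpha>0\<close> unfolding S_def by simp
  then have "S \<noteq> {}" by blast
  have least: "\<gamma> \<subseteq> \<alpha>' \<and> \<delta> \<subseteq> \<beta>'" if "(\<alpha>', \<beta>') \<in> S" for \<alpha>' \<beta>'
    using that unfolding \<gamma>_def \<delta>_def by (metis INT_lower fst_conv snd_conv)
  have sub0: "\<gamma> \<subseteq> \<alpha>0" "\<delta> \<subseteq> \<beta>0" using least[OF \<open>(\<alpha>0, \<beta>0) \<in> S\<close>] by simp_all
  have "a \<in> \<gamma>" unfolding \<gamma>_def S_def by auto
  have sync: "synchronisation A B g h \<gamma> \<delta>"
    unfolding \<gamma>_def \<delta>_def
    by (rule synchronisation_INT[OF g h \<open>S \<noteq> {}\<close>]) (auto simp: S_def)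
  have "is_path A B g h \<gamma> \<delta>"
    unfolding is_path_def
  proof (intro conjI allI impI)
    show "synchronisation A B g h \<gamma> \<delta>" by (rule sync)
    show "\<gamma> \<noteq> {} \<or> \<delta> \<noteq> {}" using \<open>a \<in> \<gamma>\<close> by blast
    fix \<alpha>' \<beta>'
    assume sub: "synchronisation A B g h \<alpha>' \<beta>' \<and> (\<alpha>' \<noteq> {} \<or> \<beta>' \<noteq> {}) \<and> \<alpha>' \<subseteq> \<gamma> \<and> \<beta>' \<subseteq> \<delta>"
    text \<open>If a sub-synchronisation missed a, removing it from (\<gamma>, \<delta>) would leave a
      smaller synchronisation containing a, contradicting minimality.\<close>
    have "a \<in> \<alpha>'"
    proof (rule ccontr)
      assume "a \<notin> \<alpha>'"
      have "synchronisation A B g h (\<gamma> - \<alpha>') (\<delta> - \<beta>')"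
        using synchronisation_Diff[OF g h sync] sub by blast
      then have "(\<gamma> - \<alpha>', \<delta> - \<beta>') \<in> S"
        using \<open>a \<in> \<gamma>\<close> \<open>a \<notin> \<alpha>'\<close> unfolding S_def by simp
      then have "\<gamma> \<subseteq> \<gamma> - \<alpha>' \<and> \<delta> \<subseteq> \<delta> - \<beta>'" by (rule least)
      then show False using sub by blast
    qed
    then have "(\<alpha>', \<beta>') \<in> S" using sub unfolding S_def by simp
    then have "\<gamma> \<subseteq> \<alpha>' \<and> \<delta> \<subseteq> \<beta>'" by (rule least)
    then show "\<alpha>' = \<gamma>" "\<beta>' = \<delta>" using sub by blast+
  qed
  then show ?thesis using \<open>a \<in> \<gamma>\<close> sub0 by blast
qed

lemma path_through_right:
  assumes "irel g A Y" "irel h B Y"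
    and "synchronisation A B g h \<alpha>0 \<beta>0" "b \<in> \<beta>0"
  shows "\<exists>\<alpha> \<beta>. is_path A B g h \<alpha> \<beta> \<and> b \<in> \<beta> \<and> \<alpha> \<subseteq> \<alpha>0 \<and> \<beta> \<subseteq> \<beta>0"
  using path_through_left[OF assms(2,1) synchronisation_swap[THEN iffD1, OF assms(3)] assms(4)]
    is_path_swap[of A B g h] by blast

lemma mem_paths [simp]: "(\<alpha>, \<beta>) \<in> paths A B g h \<longleftrightarrow> is_path A B g h \<alpha> \<beta>"
  unfolding paths_def by simp

lemma mem_path_proj1 [simp]:
  "((\<alpha>, \<beta>), a) \<in> path_proj1 (paths A B g h) \<longleftrightarrow> is_path A B g h \<alpha> \<beta> \<and> a \<in> \<alpha>"
  unfolding path_proj1_def by simp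

lemma mem_path_proj2 [simp]:
  "((\<alpha>, \<beta>), b) \<in> path_proj2 (paths A B g h) \<longleftrightarrow> is_path A B g h \<alpha> \<beta> \<and> b \<in> \<beta>"
  unfolding path_proj2_def by simp

text \<open>The projections are injective relations by fact (1).\<close>

lemma path_proj1_irel:
  assumes "irel g A Y" "irel h B Y"
  shows "irel (path_proj1 (paths A B g h)) (paths A B g h) A"
  unfolding irel_def
proof (intro conjI allI impI)
  show "path_proj1 (paths A B g h) \<subseteq> paths A B g h \<times> A"
    using is_path_synchronisation unfolding path_proj1_def synchronisation_def by fastforce
  fix \<pi> \<pi>' c
  assume "(\<pi>, c) \<in> path_proj1 (paths A B g h)" "(\<pi>', c) \<in> path_proj1 (paths A B g h)"
  moreover obtain \<alpha> \<beta> \<alpha>' \<beta>' where \<pi>: "\<pi> = (\<alpha>, \<beta>)" "\<pi>' = (\<alpha>', \<beta>')" by fastforce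
  ultimately have "is_path A B g h \<alpha> \<beta>" "is_path A B g h \<alpha>' \<beta>'" "c \<in> \<alpha> \<inter> \<alpha>'" by auto
  then show "\<pi> = \<pi>'" using paths_overlap_eq[OF assms] unfolding \<pi> by blast
qed

lemma path_proj2_irel:
  assumes "irel g A Y" "irel h B Y"
  shows "irel (path_proj2 (paths A B g h)) (paths A B g h) B"
  unfolding irel_def
proof (intro conjI allI impI)
  show "path_proj2 (paths A B g h) \<subseteq> paths A B g h \<times> B"
    using is_path_synchronisation unfolding path_proj2_def synchronisation_def by fastforce
  fix \<pi> \<pi>' c
  assume "(\<pi>, c) \<in> path_proj2 (paths A B g h)" "(\<pi>', c) \<in> path_proj2 (paths A B g h)"
  moreover obtain \<alpha> \<beta> \<alpha>' \<beta>' where \<pi>: "\<pi> = (\<alpha>, \<beta>)" "\<pi>' = (\<alpha>', \<beta>')" by fastforce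
  ultimately have "is_path A B g h \<alpha> \<beta>" "is_path A B g h \<alpha>' \<beta>'" "c \<in> \<beta> \<inter> \<beta>'" by auto
  then show "\<pi> = \<pi>'" using paths_overlap_eq[OF assms] unfolding \<pi> by blast
qed

text \<open>The square commutes: p then g relates a path to g(\<alpha>) = h(\<beta>).\<close>

lemma path_proj_commute:
  fixes g :: "('a \<times> 'y) set" and h :: "('b \<times> 'y) set"
  shows "path_proj1 (paths A B g h) O g = path_proj2 (paths A B g h) O h"
proof (rule set_eqI)
  fix z :: "('a set \<times> 'b set) \<times> 'y"
  obtain \<alpha> \<beta> v where z: "z = ((\<alpha>, \<beta>), v)" by (metis prod.collapse)
  have "z \<in> path_proj1 (paths A B g h) O g \<longleftrightarrow> is_path A B g h \<alpha> \<beta> \<and> v \<in> g `` \<alpha>"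
    unfolding z by auto
  also have "\<dots> \<longleftrightarrow> is_path A B g h \<alpha> \<beta> \<and> v \<in> h `` \<beta>"
    using is_path_synchronisation unfolding synchronisation_def by blast
  also have "\<dots> \<longleftrightarrow> z \<in> path_proj2 (paths A B g h) O h"
    unfolding z by auto
  finally show "z \<in> path_proj1 (paths A B g h) O g \<longleftrightarrow> z \<in> path_proj2 (paths A B g h) O h" .
qed

definition mediator ::
  "'x set \<Rightarrow> ('x \<times> 'a) set \<Rightarrow> ('x \<times> 'b) set \<Rightarrow> ('a set \<times> 'b set) set \<Rightarrow> ('x \<times> ('a set \<times> 'b set)) set"
  where "mediator X x y P =
    {(\<xi>, (\<alpha>, \<beta>)). \<xi> \<in> X \<and> (\<alpha>, \<beta>) \<in> P \<and> \<alpha> \<subseteq> x `` {\<xi>} \<and> \<beta> \<subseteq> y `` {\<xi>}}"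

lemma mem_mediator [simp]:
  "(\<xi>, (\<alpha>, \<beta>)) \<in> mediator X x y P \<longleftrightarrow> \<xi> \<in> X \<and> (\<alpha>, \<beta>) \<in> P \<and> \<alpha> \<subseteq> x `` {\<xi>} \<and> \<beta> \<subseteq> y `` {\<xi>}"
  unfolding mediator_def by simp

lemma cone_fibre_synchronisation:
  assumes "irel x X A" "irel y X B" "x O g = y O h"
  shows "synchronisation A B g h (x `` {\<xi>}) (y `` {\<xi>})"
proof -
  have "g `` (x `` {\<xi>}) = h `` (y `` {\<xi>})"
    using arg_cong[OF assms(3), of "\<lambda>R. R `` {\<xi>}"] by (simp add: relcomp_Image)
  then show ?thesis
    using irel_subset[OF assms(1)] irel_subset[OF assms(2)]
    unfolding synchronisation_def by blast
qed

text \<open>Paths are non-empty, and distinct points have disjoint fibres, so the mediator is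
  injective.\<close>

lemma mediator_irel:
  assumes "irel x X A" "irel y X B"
  shows "irel (mediator X x y (paths A B g h)) X (paths A B g h)"
  unfolding irel_def
proof (intro conjI allI impI)
  fix \<xi> \<xi>' \<pi>
  assume "(\<xi>, \<pi>) \<in> mediator X x y (paths A B g h)" "(\<xi>', \<pi>) \<in> mediator X x y (paths A B g h)"
  moreover obtain \<alpha> \<beta> where "\<pi> = (\<alpha>, \<beta>)" by fastforce
  ultimately have "is_path A B g h \<alpha> \<beta>" "\<alpha> \<subseteq> x `` {\<xi>} \<inter> x `` {\<xi>'}" "\<beta> \<subseteq> y `` {\<xi>} \<inter> y `` {\<xi>'}"
    by auto
  then show "\<xi> = \<xi>'"
    using is_path_nonempty irel_inj[OF assms(1)] irel_inj[OF assms(2)] by blast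
qed (auto simp: mediator_def)

text \<open>By fact (2), every element of a fibre lies in a path inside that fibre, so the
  mediator composed with the projections recovers the cone.\<close>

lemma mediator_proj1:
  assumes "irel g A Y" "irel h B Y" "irel x X A" "irel y X B" "x O g = y O h"
  shows "mediator X x y (paths A B g h) O path_proj1 (paths A B g h) = x"
proof (intro set_eqI iffI)
  fix z assume "z \<in> x"
  then obtain \<xi> a where z: "z = (\<xi>, a)" and "(\<xi>, a) \<in> x" by (cases z) auto
  then have "\<xi> \<in> X" "a \<in> x `` {\<xi>}" using irel_subset[OF assms(3)] by blast+
  then show "z \<in> mediator X x y (paths A B g h) O path_proj1 (paths A B g h)"
    using path_through_left[OF assms(1,2) cone_fibre_synchronisation[OF assms(3-5)]]
    unfolding z by (fastforce simp: relcomp_unfold)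
qed (auto simp: relcomp_unfold mediator_def path_proj1_def)

lemma mediator_proj2:
  assumes "irel g A Y" "irel h B Y" "irel x X A" "irel y X B" "x O g = y O h"
  shows "mediator X x y (paths A B g h) O path_proj2 (paths A B g h) = y"
proof (intro set_eqI iffI)
  fix z assume "z \<in> y"
  then obtain \<xi> b where z: "z = (\<xi>, b)" and "(\<xi>, b) \<in> y" by (cases z) auto
  then have "\<xi> \<in> X" "b \<in> y `` {\<xi>}" using irel_subset[OF assms(4)] by blast+
  then show "z \<in> mediator X x y (paths A B g h) O path_proj2 (paths A B g h)"
    using path_through_right[OF assms(1,2) cone_fibre_synchronisation[OF assms(3-5)]]
    unfolding z by (fastforce simp: relcomp_unfold)
qed (auto simp: relcomp_unfold mediator_def path_proj2_def)

text \<open>Any mediating relation is the mediator: it can only relate \<xi> to paths inside the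
  fibre of \<xi>, and by fact (1) it must relate \<xi> to every such path.\<close>

lemma mediator_unique:
  assumes "irel g A Y" "irel h B Y" and u: "irel u X (paths A B g h)"
    and up: "u O path_proj1 (paths A B g h) = x" and uq: "u O path_proj2 (paths A B g h) = y"
  shows "u = mediator X x y (paths A B g h)"
proof (intro set_eqI iffI)
  fix z assume "z \<in> u"
  moreover obtain \<xi> \<alpha> \<beta> where z: "z = (\<xi>, (\<alpha>, \<beta>))" by (rule prod_cases3)
  ultimately have zu: "(\<xi>, (\<alpha>, \<beta>)) \<in> u" by simp
  then have "\<xi> \<in> X" "is_path A B g h \<alpha> \<beta>" using irel_subset[OF u] by auto
  with zu show "z \<in> mediator X x y (paths A B g h)"
    unfolding z up[symmetric] uq[symmetric] by auto
next
  fix z assume "z \<in> mediator X x y (paths A B g h)"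
  moreover obtain \<xi> \<alpha> \<beta> where z: "z = (\<xi>, (\<alpha>, \<beta>))" by (rule prod_cases3)
  ultimately have path: "is_path A B g h \<alpha> \<beta>"
    and fibre: "\<alpha> \<subseteq> x `` {\<xi>}" "\<beta> \<subseteq> y `` {\<xi>}" by auto
  text \<open>Some element c of the path is related to \<xi>, so u relates \<xi> to a path
    containing c; by fact (1) that path is (\<alpha>, \<beta>) itself.\<close>
  obtain \<alpha>' \<beta>' where u': "(\<xi>, (\<alpha>', \<beta>')) \<in> u" and path': "is_path A B g h \<alpha>' \<beta>'"
    and overlap: "\<alpha> \<inter> \<alpha>' \<noteq> {} \<or> \<beta> \<inter> \<beta>' \<noteq> {}"
  proof (cases "\<alpha> = {}")
    case False
    then obtain a where "a \<in> \<alpha>" by blast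
    then have "(\<xi>, a) \<in> u O path_proj1 (paths A B g h)" using fibre up by blast
    then obtain \<pi> where "(\<xi>, \<pi>) \<in> u" "(\<pi>, a) \<in> path_proj1 (paths A B g h)" by blast
    moreover obtain \<alpha>' \<beta>' where "\<pi> = (\<alpha>', \<beta>')" by fastforce
    ultimately show thesis using that \<open>a \<in> \<alpha>\<close> by auto
  next
    case True
    then obtain b where "b \<in> \<beta>" using is_path_nonempty[OF path] by blast
    then have "(\<xi>, b) \<in> u O path_proj2 (paths A B g h)" using fibre uq by blast
    then obtain \<pi> where "(\<xi>, \<pi>) \<in> u" "(\<pi>, b) \<in> path_proj2 (paths A B g h)" by blast
    moreover obtain \<alpha>' \<beta>' where "\<pi> = (\<alpha>', \<beta>')" by fastforce
    ultimately show thesis using that \<open>b \<in> \<beta>\<close> by auto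
  qed
  have "\<alpha> = \<alpha>' \<and> \<beta> = \<beta>'" by (rule paths_overlap_eq[OF assms(1,2) path path' overlap])
  then show "z \<in> u" using u' unfolding z by simp
qed

theorem theorem1:
  fixes A :: "'a set" and B :: "'b set" and Y :: "'y set"
    and g :: "('a \<times> 'y) set" and h :: "('b \<times> 'y) set"
  assumes "irel g A Y" and "irel h B Y"
  defines "P \<equiv> paths A B g h"
  defines "p \<equiv> path_proj1 P"
  defines "q \<equiv> path_proj2 P"
  shows "irel p P A \<and> irel q P B \<and> p O g = q O h \<and>
    (\<forall>(X :: 'x set) x y. irel x X A \<and> irel y X B \<and> x O g = y O h \<longrightarrow>
       (\<exists>!u. irel u X P \<and> u O p = x \<and> u O q = y))"
proof (intro conjI allI impI)
  show "irel p P A" unfolding p_def P_def by (rule path_proj1_irel[OF assms(1,2)])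
  show "irel q P B" unfolding q_def P_def by (rule path_proj2_irel[OF assms(1,2)])
  show "p O g = q O h" unfolding p_def q_def P_def by (rule path_proj_commute)
  fix X :: "'x set" and x y
  assume "irel x X A \<and> irel y X B \<and> x O g = y O h"
  then have cone: "irel x X A" "irel y X B" "x O g = y O h" by simp_all
  show "\<exists>!u. irel u X P \<and> u O p = x \<and> u O q = y"
  proof (rule ex1I)
    show "irel (mediator X x y P) X P \<and> mediator X x y P O p = x \<and> mediator X x y P O q = y"
      unfolding P_def p_def q_def
      using mediator_irel[OF cone(1,2)] mediator_proj1[OF assms(1,2) cone]
        mediator_proj2[OF assms(1,2) cone] by simp
  next
    fix u assume "irel u X P \<and> u O p = x \<and> u O q = y"
    then show "u = mediator X x y P"
      unfolding P_def p_def q_def using mediator_unique[OF assms(1,2)] by blast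
  qed
qed

end
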